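(* Let $M_1$ and $M_2$ be smooth connected manifolds and $\Gamma\subset\mathrm{Diff}(M_1)\times\mathrm{Diff}(M_2)$ a group of diffeomorphisms of $M_1\times M_2$ that is of quotient type. Then $\Gamma$ is properly discontinuous.
   Context: A group $\Gamma$ of diffeomorphisms of a manifold $M$ is properly discontinuous if (PD1) each $p\in M$ has a neighbourhood $U$ with $\gamma(U)\cap U=\emptyset$ for all $\gamma\in\Gamma\setminus\{1\}$, and (PD2) any two points $p,q$ not in the same $\Gamma$-orbit have neighbourhoods $U_p,U_q$ with $\gamma(U_p)\cap U_q=\emptyset$ for all $\gamma\in\Gamma$. For $\Gamma\subset\mathrm{Diff}(M_1)\times\mathrm{Diff}(M_2)$ let $\Gamma_i$ be its projection to $\mathrm{Diff}(M_i)$ and, for $\sigma\in\Gamma_2$, $\Gamma_\sigma:=\{\gamma\in\Gamma_1:(\gamma,\sigma)\in\Gamma\}$. $\Gamma$ is of quotient type if (i) $\Gamma_2$ is properly discontinuous, (ii) $\Gamma_{\mathrm{Id}_{M_2}}\subset\Gamma_1$ satisfies (PD1), and (iii) $\Gamma_\sigma\subset\Gamma_1$ satisfies (PD2) (in the sense: points of $M_1$ not related by an element of $\Gamma_\sigma$ have neighbourhoods $U,V$ with $\gamma(U)\cap V=\emptyset$ for all $\gamma\in\Gamma_\sigma$) for all $\sigma\in\Gamma_2$; or if the same holds with the roles of $M_1$ and $M_2$ exchanged. *)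

theory Defs
  imports "HOL-Analysis.Analysis"
begin

(* A map is a self-homeomorphism of the whole space (stand-in for a diffeomorphism). *)
definition self_homeo :: "('a::topological_space \<Rightarrow> 'a) \<Rightarrow> bool" where
  "self_homeo f \<longleftrightarrow> (\<exists>g. homeomorphism UNIV UNIV f g)"

(* Topological manifold of dimension CARD('n): Hausdorff, second countable (type classes),
   and locally homeomorphic to open subsets of real^'n. *)
definition locally_euclidean :: "'a::topological_space itself \<Rightarrow> 'n::finite itself \<Rightarrow> bool" where
  "locally_euclidean _ _ \<longleftrightarrow>
     (\<forall>p::'a. \<exists>U (V::(real^'n) set). open U \<and> p \<in> U \<and> open V \<and> U homeomorphic V)"

definition PD1 :: "('a::topological_space \<Rightarrow> 'a) set \<Rightarrow> bool" where
  "PD1 G \<longleftrightarrow> (\<forall>p. \<exists>U. open U \<and> p \<in> U \<and> (\<forall>\<gamma>\<in>G. \<gamma> \<noteq> id \<longrightarrow> \<gamma> ` U \<inter> U = {}))"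

definition PD2 :: "('a::topological_space \<Rightarrow> 'a) set \<Rightarrow> bool" where
  "PD2 G \<longleftrightarrow> (\<forall>p q. (\<forall>\<gamma>\<in>G. \<gamma> p \<noteq> q) \<longrightarrow>
      (\<exists>U V. open U \<and> p \<in> U \<and> open V \<and> q \<in> V \<and> (\<forall>\<gamma>\<in>G. \<gamma> ` U \<inter> V = {})))"

definition properly_discontinuous :: "('a::topological_space \<Rightarrow> 'a) set \<Rightarrow> bool" where
  "properly_discontinuous G \<longleftrightarrow> PD1 G \<and> PD2 G"

definition product_homeo_group ::
  "(('a::topological_space \<Rightarrow> 'a) \<times> ('b::topological_space \<Rightarrow> 'b)) set \<Rightarrow> bool" where
  "product_homeo_group \<Gamma> \<longleftrightarrow>
     (\<forall>\<gamma>\<in>\<Gamma>. self_homeo (fst \<gamma>) \<and> self_homeo (snd \<gamma>)) \<and>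
     (id, id) \<in> \<Gamma> \<and>
     (\<forall>a\<in>\<Gamma>. \<forall>b\<in>\<Gamma>. (fst a \<circ> fst b, snd a \<circ> snd b) \<in> \<Gamma>) \<and>
     (\<forall>a\<in>\<Gamma>. \<exists>b\<in>\<Gamma>. fst a \<circ> fst b = id \<and> fst b \<circ> fst a = id \<and>
                       snd a \<circ> snd b = id \<and> snd b \<circ> snd a = id)"

definition prod_action ::
  "(('a \<Rightarrow> 'a) \<times> ('b \<Rightarrow> 'b)) set \<Rightarrow> ('a \<times> 'b \<Rightarrow> 'a \<times> 'b) set" where
  "prod_action \<Gamma> = (\<lambda>\<gamma>. map_prod (fst \<gamma>) (snd \<gamma>)) ` \<Gamma>"

definition slice2 :: "(('a \<Rightarrow> 'a) \<times> ('b \<Rightarrow> 'b)) set \<Rightarrow> ('b \<Rightarrow> 'b) \<Rightarrow> ('a \<Rightarrow> 'a) set" where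
  "slice2 \<Gamma> \<sigma> = {\<gamma>. (\<gamma>, \<sigma>) \<in> \<Gamma>}"

definition slice1 :: "(('a \<Rightarrow> 'a) \<times> ('b \<Rightarrow> 'b)) set \<Rightarrow> ('a \<Rightarrow> 'a) \<Rightarrow> ('b \<Rightarrow> 'b) set" where
  "slice1 \<Gamma> \<sigma> = {\<gamma>. (\<sigma>, \<gamma>) \<in> \<Gamma>}"

definition of_quotient_type ::
  "(('a::topological_space \<Rightarrow> 'a) \<times> ('b::topological_space \<Rightarrow> 'b)) set \<Rightarrow> bool" where
  "of_quotient_type \<Gamma> \<longleftrightarrow>
     (properly_discontinuous (snd ` \<Gamma>) \<and> PD1 (slice2 \<Gamma> id) \<and>
        (\<forall>\<sigma>\<in>snd ` \<Gamma>. PD2 (slice2 \<Gamma> \<sigma>)))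
   \<or> (properly_discontinuous (fst ` \<Gamma>) \<and> PD1 (slice1 \<Gamma> id) \<and>
        (\<forall>\<sigma>\<in>fst ` \<Gamma>. PD2 (slice1 \<Gamma> \<sigma>)))"

end

theory Submission
  imports Defs
begin

text \<open>
  Write \<open>\<Gamma>\<^sub>2\<close> for the projection of \<open>\<Gamma>\<close> to the second factor. A neighbourhood \<open>W\<close> of \<open>q\<close>
  on which \<open>\<Gamma>\<^sub>2\<close> acts freely has pairwise disjoint translates \<open>b W\<close>, \<open>b \<in> \<Gamma>\<^sub>2\<close>. Hence, given
  \<open>(p,q)\<close> and \<open>(p',q') = (p', \<sigma> q)\<close>, the box \<open>U \<times> W\<close> can only meet \<open>U' \<times> \<sigma> W\<close> under elements
  \<open>(\<gamma>, \<sigma>)\<close>, and these are controlled by (PD2) for the fibre \<open>\<Gamma>\<^sub>\<sigma>\<close>; if \<open>q'\<close> is not in the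
  \<open>\<Gamma>\<^sub>2\<close>-orbit of \<open>q\<close>, (PD2) for \<open>\<Gamma>\<^sub>2\<close> separates already in the second factor. (PD1) is
  similar and simpler. The case with the factors exchanged follows by conjugating with
  the swap homeomorphism.
\<close>

lemma homeomorphism_UNIV_open_image:
  assumes "homeomorphism UNIV UNIV f g" "open U"
  shows "open (f ` U)"
  using homeomorphism_imp_open_map[OF assms(1)] assms(2) by simp

lemma free_nbhd_translates_disjoint:
  assumes free: "\<forall>\<gamma>\<in>H. \<gamma> \<noteq> id \<longrightarrow> \<gamma> ` W \<inter> W = {}"
    and inv: "t \<circ> s = id" "s \<circ> t = id"
    and "t \<circ> b \<in> H" "b \<noteq> s"
  shows "b ` W \<inter> s ` W = {}"
proof (rule ccontr)
  assume "b ` W \<inter> s ` W \<noteq> {}"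
  then obtain w1 w2 where w: "w1 \<in> W" "w2 \<in> W" "b w1 = s w2" by auto
  then have "(t \<circ> b) w1 = w2" using inv(1) by (simp add: pointfree_idE)
  then have "(t \<circ> b) ` W \<inter> W \<noteq> {}" using w by blast
  then have "t \<circ> b = id" using free \<open>t \<circ> b \<in> H\<close> by blast
  then have "b = s" using inv(2) by (metis comp_assoc comp_id id_comp)
  with \<open>b \<noteq> s\<close> show False ..
qed

lemma snd_image_group_inverse:
  assumes "product_homeo_group \<Gamma>" "s \<in> snd ` \<Gamma>"
  shows "\<exists>t. t \<circ> s = id \<and> s \<circ> t = id \<and> (\<forall>b\<in>snd ` \<Gamma>. t \<circ> b \<in> snd ` \<Gamma>)"
proof -
  obtain a where "(a, s) \<in> \<Gamma>" using assms(2) by force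
  then obtain c where c: "c \<in> \<Gamma>" "snd c \<circ> s = id" "s \<circ> snd c = id"
    using assms(1) unfolding product_homeo_group_def by fastforce
  have "snd c \<circ> b \<in> snd ` \<Gamma>" if b: "b \<in> snd ` \<Gamma>" for b
  proof -
    obtain a' where "(a', b) \<in> \<Gamma>" using b by force
    then have "(fst c \<circ> a', snd c \<circ> b) \<in> \<Gamma>"
      using assms(1) c(1) unfolding product_homeo_group_def by fastforce
    then show ?thesis by force
  qed
  with c show ?thesis by blast
qed

lemma prod_action_memE:
  assumes "g \<in> prod_action \<Gamma>"
  obtains a b where "(a, b) \<in> \<Gamma>" "g = map_prod a b"
  using assms unfolding prod_action_def by auto

lemma PD1E:
  assumes "PD1 G"
  obtains U where "open U" "p \<in> U" "\<forall>\<gamma>\<in>G. \<gamma> \<noteq> id \<longrightarrow> \<gamma> ` U \<inter> U = {}"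
  using assms unfolding PD1_def by (elim allE[of _ p] exE conjE) (rule that)

lemma PD2E:
  assumes "PD2 G" "\<forall>\<gamma>\<in>G. \<gamma> p \<noteq> q"
  obtains U V where "open U" "p \<in> U" "open V" "q \<in> V" "\<forall>\<gamma>\<in>G. \<gamma> ` U \<inter> V = {}"
  using mp[OF assms(1)[unfolded PD2_def, THEN spec, THEN spec] assms(2)]
  by (elim exE conjE) (rule that)

lemma map_prod_image_Times_disjoint:
  assumes "a ` U \<inter> U' = {} \<or> b ` V \<inter> V' = {}"
  shows "map_prod a b ` (U \<times> V) \<inter> U' \<times> V' = {}"
  using assms unfolding map_prod_image by blast

lemma PD1_prod_action:
  assumes fibre: "PD1 (slice2 \<Gamma> id)" and base: "PD1 (snd ` \<Gamma>)"
  shows "PD1 (prod_action \<Gamma>)"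
  unfolding PD1_def
proof
  fix x :: "'a \<times> 'b"
  obtain p q where x: "x = (p, q)" by (rule prod.exhaust)
  obtain U where U: "open U" "p \<in> U" "\<forall>\<gamma>\<in>slice2 \<Gamma> id. \<gamma> \<noteq> id \<longrightarrow> \<gamma> ` U \<inter> U = {}"
    using fibre by (rule PD1E)
  obtain V where V: "open V" "q \<in> V" "\<forall>\<sigma>\<in>snd ` \<Gamma>. \<sigma> \<noteq> id \<longrightarrow> \<sigma> ` V \<inter> V = {}"
    using base by (rule PD1E)
  show "\<exists>W. open W \<and> x \<in> W \<and> (\<forall>g\<in>prod_action \<Gamma>. g \<noteq> id \<longrightarrow> g ` W \<inter> W = {})"
  proof (intro exI[where x = "U \<times> V"] conjI ballI impI)
    show "open (U \<times> V)" "x \<in> U \<times> V" using U V x by (auto simp: open_Times)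
    fix g assume g: "g \<in> prod_action \<Gamma>" "g \<noteq> id"
    obtain a b where ab: "(a, b) \<in> \<Gamma>" "g = map_prod a b"
      using g(1) by (rule prod_action_memE)
    have "a ` U \<inter> U = {} \<or> b ` V \<inter> V = {}"
    proof (cases "b = id")
      case True
      then have "a \<in> slice2 \<Gamma> id" "a \<noteq> id" using ab g(2) by (auto simp: slice2_def)
      then show ?thesis using U(3) by blast
    next
      case False
      moreover have "b \<in> snd ` \<Gamma>" using ab(1) by (simp add: rev_image_eqI)
      ultimately show ?thesis using V(3) by blast
    qed
    then show "g ` (U \<times> V) \<inter> U \<times> V = {}"
      unfolding ab(2) by (rule map_prod_image_Times_disjoint)
  qed
qed

lemma prod_action_separated_off_base_orbit:
  assumes base: "PD2 (snd ` \<Gamma>)" and "\<forall>\<sigma>\<in>snd ` \<Gamma>. \<sigma> q \<noteq> q'"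
  shows "\<exists>U V. open U \<and> (p, q) \<in> U \<and> open V \<and> (p', q') \<in> V \<and>
    (\<forall>g\<in>prod_action \<Gamma>. g ` U \<inter> V = {})"
proof -
  obtain V V' where V: "open V" "q \<in> V" "open V'" "q' \<in> V'" "\<forall>\<sigma>\<in>snd ` \<Gamma>. \<sigma> ` V \<inter> V' = {}"
    using assms by (rule PD2E)
  show ?thesis
  proof (rule exI[where x = "UNIV \<times> V"], rule exI[where x = "UNIV \<times> V'"], intro conjI ballI)
    show "open (UNIV \<times> V)" "open (UNIV \<times> V')" "(p, q) \<in> UNIV \<times> V" "(p', q') \<in> UNIV \<times> V'"
      using V by (auto simp: open_Times)
    fix g assume "g \<in> prod_action \<Gamma>"
    then obtain a b where ab: "(a, b) \<in> \<Gamma>" "g = map_prod a b" by (rule prod_action_memE)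
    then have "b \<in> snd ` \<Gamma>" by (simp add: rev_image_eqI)
    then have "b ` V \<inter> V' = {}" using V(5) by blast
    then show "g ` (UNIV \<times> V) \<inter> UNIV \<times> V' = {}"
      unfolding ab(2) by (intro map_prod_image_Times_disjoint disjI2)
  qed
qed

lemma prod_action_separated_on_base_orbit:
  assumes grp: "product_homeo_group \<Gamma>" and base_free: "PD1 (snd ` \<Gamma>)"
    and \<sigma>: "\<sigma> \<in> snd ` \<Gamma>" "\<sigma> q = q'"
    and fibre: "PD2 (slice2 \<Gamma> \<sigma>)" "\<forall>\<gamma>\<in>slice2 \<Gamma> \<sigma>. \<gamma> p \<noteq> p'"
  shows "\<exists>U V. open U \<and> (p, q) \<in> U \<and> open V \<and> (p', q') \<in> V \<and>
    (\<forall>g\<in>prod_action \<Gamma>. g ` U \<inter> V = {})"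
proof -
  obtain t where t: "t \<circ> \<sigma> = id" "\<sigma> \<circ> t = id" "\<forall>b\<in>snd ` \<Gamma>. t \<circ> b \<in> snd ` \<Gamma>"
    using snd_image_group_inverse[OF grp \<sigma>(1)] by blast
  have "self_homeo \<sigma>" using \<sigma>(1) grp unfolding product_homeo_group_def by blast
  then obtain \<tau> where \<sigma>_homeo: "homeomorphism UNIV UNIV \<sigma> \<tau>" unfolding self_homeo_def ..
  obtain U U' where U: "open U" "p \<in> U" "open U'" "p' \<in> U'" "\<forall>\<gamma>\<in>slice2 \<Gamma> \<sigma>. \<gamma> ` U \<inter> U' = {}"
    using fibre by (rule PD2E)
  obtain W where W: "open W" "q \<in> W" "\<forall>b\<in>snd ` \<Gamma>. b \<noteq> id \<longrightarrow> b ` W \<inter> W = {}"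
    using base_free by (rule PD1E)
  show ?thesis
  proof (rule exI[where x = "U \<times> W"], rule exI[where x = "U' \<times> \<sigma> ` W"], intro conjI ballI)
    show "open (U \<times> W)" "open (U' \<times> \<sigma> ` W)" "(p, q) \<in> U \<times> W" "(p', q') \<in> U' \<times> \<sigma> ` W"
      using U W \<sigma>(2) homeomorphism_UNIV_open_image[OF \<sigma>_homeo W(1)]
      by (auto simp: open_Times)
    fix g assume "g \<in> prod_action \<Gamma>"
    then obtain a b where ab: "(a, b) \<in> \<Gamma>" "g = map_prod a b" by (rule prod_action_memE)
    have "a ` U \<inter> U' = {} \<or> b ` W \<inter> \<sigma> ` W = {}"
    proof (cases "b = \<sigma>")
      case True
      then have "a \<in> slice2 \<Gamma> \<sigma>" using ab(1) by (simp add: slice2_def)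
      then show ?thesis using U(5) by blast
    next
      case False
      have "b \<in> snd ` \<Gamma>" using ab(1) by (simp add: rev_image_eqI)
      then have "t \<circ> b \<in> snd ` \<Gamma>" using t(3) by blast
      then show ?thesis using free_nbhd_translates_disjoint[OF W(3) t(1,2) _ False] by blast
    qed
    then show "g ` (U \<times> W) \<inter> U' \<times> \<sigma> ` W = {}"
      unfolding ab(2) by (rule map_prod_image_Times_disjoint)
  qed
qed

lemma PD2_prod_action:
  assumes grp: "product_homeo_group \<Gamma>"
    and base: "PD1 (snd ` \<Gamma>)" "PD2 (snd ` \<Gamma>)"
    and fibres: "\<forall>\<sigma>\<in>snd ` \<Gamma>. PD2 (slice2 \<Gamma> \<sigma>)"
  shows "PD2 (prod_action \<Gamma>)"
  unfolding PD2_def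
proof (intro allI impI)
  fix x y :: "'a \<times> 'b"
  assume unrelated: "\<forall>g\<in>prod_action \<Gamma>. g x \<noteq> y"
  obtain p q p' q' where xy: "x = (p, q)" "y = (p', q')" by (metis prod.exhaust)
  show "\<exists>U V. open U \<and> x \<in> U \<and> open V \<and> y \<in> V \<and> (\<forall>g\<in>prod_action \<Gamma>. g ` U \<inter> V = {})"
  proof (cases "\<exists>\<sigma>\<in>snd ` \<Gamma>. \<sigma> q = q'")
    case False
    then show ?thesis
      unfolding xy by (intro prod_action_separated_off_base_orbit[OF base(2)]) blast
  next
    case True
    then obtain \<sigma> where \<sigma>: "\<sigma> \<in> snd ` \<Gamma>" "\<sigma> q = q'" by blast
    have "\<forall>\<gamma>\<in>slice2 \<Gamma> \<sigma>. \<gamma> p \<noteq> p'"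
    proof
      fix \<gamma> assume "\<gamma> \<in> slice2 \<Gamma> \<sigma>"
      then have "map_prod \<gamma> \<sigma> \<in> prod_action \<Gamma>"
        unfolding prod_action_def slice2_def by (simp add: rev_image_eqI)
      then have "map_prod \<gamma> \<sigma> x \<noteq> y" using unrelated by blast
      then show "\<gamma> p \<noteq> p'" using \<sigma>(2) by (simp add: xy)
    qed
    with \<sigma> fibres show ?thesis
      unfolding xy by (intro prod_action_separated_on_base_orbit[OF grp base(1)]) auto
  qed
qed

lemma properly_discontinuous_prod_action:
  assumes "product_homeo_group \<Gamma>"
    and "properly_discontinuous (snd ` \<Gamma>)"
    and "PD1 (slice2 \<Gamma> id)"
    and "\<forall>\<sigma>\<in>snd ` \<Gamma>. PD2 (slice2 \<Gamma> \<sigma>)"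
  shows "properly_discontinuous (prod_action \<Gamma>)"
proof -
  have "PD1 (snd ` \<Gamma>)" "PD2 (snd ` \<Gamma>)"
    using assms(2) unfolding properly_discontinuous_def by auto
  then show ?thesis
    unfolding properly_discontinuous_def
    using PD1_prod_action[OF assms(3)] PD2_prod_action[OF assms(1) _ _ assms(4)] by blast
qed

lemma conjugate_image_Int:
  assumes "\<And>y. h (k y) = y" "\<And>y. k (h y) = y" "g' = h \<circ> g \<circ> k"
  shows "g' ` h ` U \<inter> h ` V = h ` (g ` U \<inter> V)"
proof -
  have "inj h" by (metis assms(2) injI)
  moreover have "g' ` h ` U = h ` g ` U" using assms by (simp add: image_comp comp_def)
  ultimately show ?thesis by (simp add: image_Int)
qed

lemma PD1_conjugate:
  assumes h: "homeomorphism UNIV UNIV h k" and "PD1 G"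
  shows "PD1 ((\<lambda>g. h \<circ> g \<circ> k) ` G)"
  unfolding PD1_def
proof
  fix x
  have hk: "\<And>y. h (k y) = y" "\<And>y. k (h y) = y" using h by (auto simp: homeomorphism_def)
  obtain U where U: "open U" "k x \<in> U" "\<forall>g\<in>G. g \<noteq> id \<longrightarrow> g ` U \<inter> U = {}"
    using \<open>PD1 G\<close> by (rule PD1E)
  show "\<exists>W. open W \<and> x \<in> W \<and> (\<forall>g'\<in>(\<lambda>g. h \<circ> g \<circ> k) ` G. g' \<noteq> id \<longrightarrow> g' ` W \<inter> W = {})"
  proof (intro exI[where x = "h ` U"] conjI ballI impI)
    show "open (h ` U)" using homeomorphism_UNIV_open_image[OF h U(1)] .
    show "x \<in> h ` U" using U(2) hk(1)[of x] by (metis imageI)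
    fix g' assume "g' \<in> (\<lambda>g. h \<circ> g \<circ> k) ` G" "g' \<noteq> id"
    then obtain g where g: "g \<in> G" "g' = h \<circ> g \<circ> k" by blast
    then have "g \<noteq> id" using \<open>g' \<noteq> id\<close> hk(1) by auto
    then have "g ` U \<inter> U = {}" using U(3) g(1) by blast
    then show "g' ` h ` U \<inter> h ` U = {}"
      using conjugate_image_Int[OF hk g(2)] by simp
  qed
qed

lemma PD2_conjugate:
  assumes h: "homeomorphism UNIV UNIV h k" and "PD2 G"
  shows "PD2 ((\<lambda>g. h \<circ> g \<circ> k) ` G)"
  unfolding PD2_def
proof (intro allI impI)
  fix x y
  assume unrelated: "\<forall>g'\<in>(\<lambda>g. h \<circ> g \<circ> k) ` G. g' x \<noteq> y"
  have hk: "\<And>y. h (k y) = y" "\<And>y. k (h y) = y" using h by (auto simp: homeomorphism_def)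
  have "\<forall>g\<in>G. g (k x) \<noteq> k y"
  proof
    fix g assume "g \<in> G"
    then have "(h \<circ> g \<circ> k) x \<noteq> y" using unrelated by blast
    then show "g (k x) \<noteq> k y" using hk(1) by auto
  qed
  with \<open>PD2 G\<close> obtain U V where UV: "open U" "k x \<in> U" "open V" "k y \<in> V"
      "\<forall>g\<in>G. g ` U \<inter> V = {}"
    by (rule PD2E)
  show "\<exists>U V. open U \<and> x \<in> U \<and> open V \<and> y \<in> V \<and>
      (\<forall>g'\<in>(\<lambda>g. h \<circ> g \<circ> k) ` G. g' ` U \<inter> V = {})"
  proof (rule exI[where x = "h ` U"], rule exI[where x = "h ` V"], intro conjI ballI)
    show "open (h ` U)" "open (h ` V)"
      using homeomorphism_UNIV_open_image[OF h] UV(1,3) by auto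
    show "x \<in> h ` U" "y \<in> h ` V" using UV(2,4) hk(1) by (metis imageI)+
    fix g' assume "g' \<in> (\<lambda>g. h \<circ> g \<circ> k) ` G"
    then obtain g where g: "g \<in> G" "g' = h \<circ> g \<circ> k" by blast
    then have "g ` U \<inter> V = {}" using UV(5) by blast
    then show "g' ` h ` U \<inter> h ` V = {}"
      using conjugate_image_Int[OF hk g(2)] by simp
  qed
qed

lemma properly_discontinuous_conjugate:
  assumes "homeomorphism UNIV UNIV h k" "properly_discontinuous G"
  shows "properly_discontinuous ((\<lambda>g. h \<circ> g \<circ> k) ` G)"
  using PD1_conjugate[OF assms(1)] PD2_conjugate[OF assms(1)] assms(2)
  unfolding properly_discontinuous_def by blast

lemma homeomorphism_swap: "homeomorphism UNIV UNIV prod.swap prod.swap"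
  by (auto simp: homeomorphism_def continuous_on_swap)

lemma Bex_image_iff: "(\<exists>x\<in>f ` A. P x) \<longleftrightarrow> (\<exists>x\<in>A. P (f x))"
  by blast

lemma product_homeo_group_swap:
  assumes "product_homeo_group \<Gamma>"
  shows "product_homeo_group (prod.swap ` \<Gamma>)"
  using assms unfolding product_homeo_group_def Ball_image_comp Bex_image_iff
  by (simp add: conj_ac)

lemma prod_action_swap:
  "prod_action \<Gamma> = (\<lambda>g. prod.swap \<circ> g \<circ> prod.swap) ` prod_action (prod.swap ` \<Gamma>)"
  unfolding prod_action_def image_image by (force simp: fun_eq_iff intro!: image_cong)

lemma snd_image_swap: "snd ` prod.swap ` \<Gamma> = fst ` \<Gamma>"
  by force

lemma slice2_swap: "slice2 (prod.swap ` \<Gamma>) = slice1 \<Gamma>"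
  by (simp add: fun_eq_iff slice1_def slice2_def)

theorem lemma2:
  fixes \<Gamma> :: "(('m1::{t2_space, second_countable_topology} \<Rightarrow> 'm1) \<times>
                   ('m2::{t2_space, second_countable_topology} \<Rightarrow> 'm2)) set"
  assumes "locally_euclidean TYPE('m1) TYPE('n1::finite)"
      and "locally_euclidean TYPE('m2) TYPE('n2::finite)"
      and "connected (UNIV :: 'm1 set)"
      and "connected (UNIV :: 'm2 set)"
      and grp: "product_homeo_group \<Gamma>"
      and "of_quotient_type \<Gamma>"
  shows "properly_discontinuous (prod_action \<Gamma>)"
  using \<open>of_quotient_type \<Gamma>\<close> unfolding of_quotient_type_def
proof (elim disjE conjE)
  assume "properly_discontinuous (snd ` \<Gamma>)" "PD1 (slice2 \<Gamma> id)"
    "\<forall>\<sigma>\<in>snd ` \<Gamma>. PD2 (slice2 \<Gamma> \<sigma>)"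
  then show ?thesis by (rule properly_discontinuous_prod_action[OF grp])
next
  assume "properly_discontinuous (fst ` \<Gamma>)" "PD1 (slice1 \<Gamma> id)"
    "\<forall>\<sigma>\<in>fst ` \<Gamma>. PD2 (slice1 \<Gamma> \<sigma>)"
  then have "properly_discontinuous (prod_action (prod.swap ` \<Gamma>))"
    by (intro properly_discontinuous_prod_action product_homeo_group_swap grp)
      (simp_all only: snd_image_swap slice2_swap)
  then show ?thesis
    by (subst prod_action_swap) (rule properly_discontinuous_conjugate[OF homeomorphism_swap])
qed

end
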